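(* Let $G$ be the lattice $\mathbb Z$, unweighted, with $\mu\equiv1$. Let $x_0\in\mathbb Z$, $r\in\mathbb N$, and let $u:[0,\infty)\times\mathbb Z\to(0,\infty)$, $C^1$ in $t$, satisfy $\partial_tu=\Delta u$ on $[0,\infty)\times\bar B_{2r}(x_0)$. Then there is an absolute constant $C>0$ (independent of $x_0$, $r$, $u$) such that $$\partial_t(\log u)\ge\Psi_\Upsilon(\log u)-\varphi(t)-\frac Cr\quad\text{on }(0,\infty)\times\bar B_r(x_0),$$ where $\varphi$ is the relaxation function of the CD-function $F(a)=2e^{-a/2}\big(\Upsilon(a)+\Upsilon(-a)\big)$.
   Context: $\Delta u(x)=u(x+1)-2u(x)+u(x-1)$; $\Psi_H(v)(x)=\sum_{y\in\{x\pm1\}}H(v(y)-v(x))$; $\Upsilon(z)=e^z-1-z$; $\bar B_\rho(x_0)=\{y\in\mathbb Z:|y-x_0|\le\rho\}$. The relaxation function of a CD-function $F$ (continuous $F:[0,\infty)\to[0,\infty)$, $F(0)=0$, $F(x)/x$ strictly increasing, $\int_1^\infty dr/F<\infty$) is the unique positive solution $\varphi$ of $\dot\varphi+F(\varphi)=0$ on $(0,\infty)$ with $\varphi(0+)=\infty$. *)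

theory Defs
  imports "HOL-Analysis.Analysis"
begin

definition lap :: "(int \<Rightarrow> real) \<Rightarrow> int \<Rightarrow> real" where
  "lap u x = u (x + 1) - 2 * u x + u (x - 1)"

definition Psi :: "(real \<Rightarrow> real) \<Rightarrow> (int \<Rightarrow> real) \<Rightarrow> int \<Rightarrow> real" where
  "Psi H v x = H (v (x + 1) - v x) + H (v (x - 1) - v x)"

definition Upsilon :: "real \<Rightarrow> real" where
  "Upsilon z = exp z - 1 - z"

definition cball_Z :: "int \<Rightarrow> nat \<Rightarrow> int set" where
  "cball_Z x0 \<rho> = {y. \<bar>y - x0\<bar> \<le> int \<rho>}"

definition F57 :: "real \<Rightarrow> real" where
  "F57 a = 2 * exp (- a / 2) * (Upsilon a + Upsilon (- a))"

definition is_relaxation_function :: "(real \<Rightarrow> real) \<Rightarrow> (real \<Rightarrow> real) \<Rightarrow> bool" where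
  "is_relaxation_function F \<phi> \<longleftrightarrow>
     (\<forall>t>0. \<phi> t > 0 \<and> (\<phi> has_real_derivative (- F (\<phi> t))) (at t)) \<and>
     filterlim \<phi> at_top (at_right 0)"

end

theory Submission
  imports Defs
begin

text \<open>For a positive solution of the heat equation,
  \<open>\<partial>\<^sub>t log u - \<Psi>\<^sub>\<Upsilon>(log u) = \<Delta> log u\<close>, so it suffices to bound
  \<open>\<psi> = -\<Delta> log u\<close> from above by \<open>\<phi> + C/r\<close>.  This is a maximum principle for
  \<open>\<Phi> = \<psi> - \<phi> - h\<close> on the ball of radius \<open>2r - 1\<close>, with the barrier
  \<open>h(y) = 2/(2r - |y - x\<^sub>0|)\<close>.  Near \<open>t = 0\<close>, \<open>\<Phi> < 0\<close> because \<open>\<phi>\<close> blows up.  At a first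
  touching point \<open>\<Phi>(x) = 0 \<ge> \<Phi>(x \<pm> 1)\<close>; the heat equation expresses \<open>\<partial>\<^sub>t\<psi>(x)\<close> through
  \<open>u(x-2), \<dots>, u(x+2)\<close>, and AM-GM together with \<open>h(x \<pm> 1) \<le> h(x) + h(x)\<^sup>2\<close> and
  \<open>exp (- s) \<ge> 1 - s\<close> give \<open>\<partial>\<^sub>t\<psi>(x) < -F(\<phi>) = \<phi>'\<close>, so \<open>\<Phi>(x)\<close> was positive just before.
  On the ball of radius \<open>r\<close> the barrier is at most \<open>2/r\<close>.\<close>

lemma F57_power2: "F57 a ^ 2 = 4 * (exp a - 1) ^ 4 / exp a ^ 3"
proof -
  define z where "z = exp a"
  have z: "z > 0" by (simp add: z_def)
  have "exp (- a / 2) ^ 2 = exp (- a / 2 + - a / 2)" by (simp only: exp_add power2_eq_square)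
  also have "\<dots> = 1 / z" by (simp add: z_def exp_minus inverse_eq_divide)
  finally have half: "exp (- a / 2) ^ 2 = 1 / z" .
  have "Upsilon a + Upsilon (- a) = z + 1 / z - 2"
    by (simp add: Upsilon_def z_def exp_minus inverse_eq_divide)
  also have "\<dots> = (z - 1) ^ 2 / z"
    using z by (simp add: field_simps power2_eq_square)
  finally have "F57 a ^ 2 = 4 * exp (- a / 2) ^ 2 * ((z - 1) ^ 2 / z) ^ 2"
    by (simp add: F57_def power_mult_distrib power_divide)
  also have "\<dots> = 4 * (z - 1) ^ 4 / z ^ 3"
    unfolding half by (simp add: power_divide power3_eq_cube power4_eq_xxxx power2_eq_square mult_ac)
  finally show ?thesis by (simp add: z_def)
qed

lemma F57_comparison_polynomial:
  fixes z m h :: real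
  assumes z: "z > 1" and m: "m > 1 + h" and h: "h > 0"
  shows "(z - 1) ^ 4 * (z * m) ^ 3 < ((z * m - 1) ^ 2 - h ^ 2) ^ 2 * z ^ 3"
proof -
  define y where "y = z * m"
  have m1: "m > 1" using m h by linarith
  have ym: "y \<ge> m" using z m1 unfolding y_def by (simp add: mult_right_mono)
  have "(y - 1) ^ 2 - (y - m) ^ 2 = (m - 1) * (2 * y - 1 - m)"
    by (simp add: power2_eq_square algebra_simps)
  also have "\<dots> \<ge> (m - 1) * (m - 1)" using ym m1 by (intro mult_left_mono) auto
  finally have "(y - 1) ^ 2 - (y - m) ^ 2 \<ge> (m - 1) ^ 2" by (simp add: power2_eq_square)
  moreover have "(m - 1) ^ 2 > h ^ 2" using m h by (intro power_strict_mono) auto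
  ultimately have "(m * (z - 1)) ^ 2 < (y - 1) ^ 2 - h ^ 2"
    unfolding y_def by (simp add: algebra_simps)
  have "m ^ 3 * (z - 1) ^ 4 \<le> m * m ^ 3 * (z - 1) ^ 4"
    using m1 by (simp add: mult_right_mono[of 1 m "m ^ 3 * (z - 1) ^ 4", simplified] mult.assoc)
  also have "\<dots> = ((m * (z - 1)) ^ 2) ^ 2"
    by (simp add: power_mult_distrib power_numeral_reduce flip: power_mult)
  also have "\<dots> < ((y - 1) ^ 2 - h ^ 2) ^ 2"
    using \<open>(m * (z - 1)) ^ 2 < (y - 1) ^ 2 - h ^ 2\<close> by (intro power_strict_mono) auto
  finally have "m ^ 3 * (z - 1) ^ 4 * z ^ 3 < ((y - 1) ^ 2 - h ^ 2) ^ 2 * z ^ 3"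
    using z by (intro mult_strict_right_mono) auto
  moreover have "(z - 1) ^ 4 * (z * m) ^ 3 = m ^ 3 * (z - 1) ^ 4 * z ^ 3"
    by (simp add: power_mult_distrib)
  ultimately show ?thesis by (simp only: y_def)
qed

lemma F57_lt_shifted:
  fixes f h s :: real
  assumes f: "f > 0" and h: "h > 0" and s: "s \<ge> 0" and s2: "4 \<le> s ^ 2 * exp (f + h)"
  shows "F57 f < s * (((exp (f + h) - 1) ^ 2 - h ^ 2) / exp (f + h))"
proof -
  define y z m where "y = exp (f + h)" and "z = exp f" and "m = exp h"
  have z: "z > 1" using f by (simp add: z_def)
  have m: "m > 1 + h" using h exp_minus_greater[of "- h"] by (simp add: m_def)
  have y: "y = z * m" by (simp add: y_def z_def m_def exp_add)
  have y0: "y > 0" by (simp add: y_def)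
  have "y > m" using y z m h mult_strict_right_mono[of 1 z m] by simp
  then have "(y - 1) ^ 2 > h ^ 2" using m h by (intro power_strict_mono) auto
  then have W: "((y - 1) ^ 2 - h ^ 2) / y > 0" using y0 by simp
  have "F57 f ^ 2 = 4 * (z - 1) ^ 4 / z ^ 3" by (simp add: F57_power2 z_def)
  also have "\<dots> < 4 * (((y - 1) ^ 2 - h ^ 2) ^ 2 / y ^ 3)"
  proof -
    have "(z - 1) ^ 4 / z ^ 3 < ((y - 1) ^ 2 - h ^ 2) ^ 2 / y ^ 3"
      using F57_comparison_polynomial[OF z m h] y0 z
      by (simp add: pos_divide_less_eq pos_less_divide_eq y mult.commute)
    then show ?thesis by simp
  qed
  also have "\<dots> = (4 / y) * (((y - 1) ^ 2 - h ^ 2) / y) ^ 2"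
    using y0 by (simp add: power_divide power3_eq_cube power2_eq_square)
  also have "\<dots> \<le> s ^ 2 * (((y - 1) ^ 2 - h ^ 2) / y) ^ 2"
    using s2 y0 by (intro mult_right_mono) (simp_all add: y_def pos_divide_le_eq)
  also have "\<dots> = (s * (((y - 1) ^ 2 - h ^ 2) / y)) ^ 2"
    by (rule power_mult_distrib[symmetric])
  finally have "F57 f ^ 2 < (s * (((y - 1) ^ 2 - h ^ 2) / y)) ^ 2" .
  then show ?thesis
    unfolding y_def[symmetric]
    by (rule power_less_imp_less_base) (rule mult_nonneg_nonneg[OF s less_imp_le[OF W]])
qed

lemma second_difference_quotient_gt_F57:
  fixes a b c p q f h :: real
  assumes a: "a > 0" and b: "b > 0" and c: "c > 0" and f: "f > 0" and h: "h > 0"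
    and y: "c ^ 2 / (a * b) = exp (f + h)"
    and p: "(1 - h ^ 2) * exp (- (f + h)) \<le> c * p / a ^ 2"
    and q: "(1 - h ^ 2) * exp (- (f + h)) \<le> c * q / b ^ 2"
  shows "F57 f < (p + c - 2 * a) / a + (q + c - 2 * b) / b - 2 * (a + b - 2 * c) / c"
proof -
  define Y where "Y = exp (f + h)"
  have Y0: "Y > 0" by (simp add: Y_def)
  have Y: "Y = c ^ 2 / (a * b)" by (simp add: Y_def y)
  have lower: "(1 - h ^ 2) / Y \<le> c * r / d ^ 2"
    if "(1 - h ^ 2) * exp (- (f + h)) \<le> c * r / d ^ 2" for r d
  proof -
    have "exp (- (f + h)) = 1 / Y" by (simp only: Y_def exp_minus inverse_eq_divide)
    then show ?thesis using that by simp
  qed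
  have "F57 f < ((a + b) / c) * (((Y - 1) ^ 2 - h ^ 2) / Y)"
  proof (unfold Y_def, rule F57_lt_shifted[OF f h])
    show "(a + b) / c \<ge> 0" using a b c by simp
    have "4 * a * b \<le> (a + b) ^ 2"
      using zero_le_power2[of "a - b"] by (simp add: power2_eq_square algebra_simps)
    then show "4 \<le> ((a + b) / c) ^ 2 * exp (f + h)"
      using a b c by (simp add: y[symmetric] power_divide field_simps)
  qed
  also have "\<dots> = (a / c) * (Y - 2 + (1 - h ^ 2) / Y) + (b / c) * (Y - 2 + (1 - h ^ 2) / Y)"
    using Y0 c by (simp add: field_simps power2_eq_square)
  also have "\<dots> \<le> (a / c) * (c * p / a ^ 2 + Y - 2) + (b / c) * (c * q / b ^ 2 + Y - 2)"
    using lower[OF p] lower[OF q] a b c by (intro add_mono mult_left_mono) auto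
  also have "\<dots> = (p + c - 2 * a) / a + (q + c - 2 * b) / b - 2 * (a + b - 2 * c) / c"
    unfolding Y using a b c by (simp add: field_simps power2_eq_square)
  finally show ?thesis .
qed

lemma neighbour_quotient_ge:
  fixes v :: "int \<Rightarrow> real" and x y :: int and f g h :: real
  assumes v: "\<And>z. v z > 0" and y: "\<bar>y - x\<bar> = 1"
    and bound: "1 \<le> h \<or> (- lap (\<lambda>z. ln (v z)) y \<le> f + g \<and> g \<le> h + h ^ 2)"
  shows "(1 - h ^ 2) * exp (- (f + h)) \<le> v x * v (2 * y - x) / v y ^ 2"
  using bound
proof
  assume "1 \<le> h"
  then have "(1 - h ^ 2) * exp (- (f + h)) \<le> 0"
    using mult_mono[of 1 h 1 h] by (simp add: power2_eq_square mult_nonpos_nonneg)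
  also have "0 \<le> v x * v (2 * y - x) / v y ^ 2" using v by (simp add: less_imp_le)
  finally show ?thesis .
next
  assume H: "- lap (\<lambda>z. ln (v z)) y \<le> f + g \<and> g \<le> h + h ^ 2"
  have "lap (\<lambda>z. ln (v z)) y = ln (v x) + ln (v (2 * y - x)) - 2 * ln (v y)"
  proof -
    have "x = y + 1 \<and> 2 * y - x = y - 1 \<or> x = y - 1 \<and> 2 * y - x = y + 1" using y by arith
    then show ?thesis by (auto simp: lap_def)
  qed
  also have "\<dots> = ln (v x * v (2 * y - x) / v y ^ 2)"
    using v[of x] v[of y] v[of "2 * y - x"] by (simp add: ln_mult ln_div ln_realpow)
  finally have "lap (\<lambda>z. ln (v z)) y = ln (v x * v (2 * y - x) / v y ^ 2)" .
  with H have "- (f + h) - h ^ 2 \<le> ln (v x * v (2 * y - x) / v y ^ 2)" by linarith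
  then have "exp (- (f + h) - h ^ 2) \<le> v x * v (2 * y - x) / v y ^ 2"
    using v[of x] v[of y] v[of "2 * y - x"] by (subst ln_ge_iff[symmetric]) auto
  moreover have "exp (- (f + h)) * (1 - h ^ 2) \<le> exp (- (f + h) - h ^ 2)"
    using exp_ge_add_one_self[of "- (h ^ 2)"] by (simp add: exp_diff divide_inverse exp_minus)
  ultimately show ?thesis by (simp add: mult.commute)
qed

lemma lap_quotient_gt_F57:
  fixes v w g :: "int \<Rightarrow> real" and x :: int and f h :: real
  assumes v: "\<And>y. v y > 0"
    and w: "\<And>y. \<bar>y - x\<bar> \<le> 1 \<Longrightarrow> w y = lap v y"
    and f: "f > 0" and h: "h > 0"
    and at_x: "- lap (\<lambda>y. ln (v y)) x = f + h"
    and nbr: "\<And>y. \<bar>y - x\<bar> = 1 \<Longrightarrow>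
      1 \<le> h \<or> (- lap (\<lambda>z. ln (v z)) y \<le> f + g y \<and> g y \<le> h + h ^ 2)"
  shows "F57 f < lap (\<lambda>y. w y / v y) x"
proof -
  have "ln (v x ^ 2 / (v (x + 1) * v (x - 1))) = f + h"
    using at_x v[of x] v[of "x + 1"] v[of "x - 1"] by (simp add: lap_def ln_div ln_mult ln_realpow)
  then have ratio: "v x ^ 2 / (v (x + 1) * v (x - 1)) = exp (f + h)"
    using v[of x] v[of "x + 1"] v[of "x - 1"] by (metis exp_ln divide_pos_pos mult_pos_pos zero_less_power)
  have right: "(1 - h ^ 2) * exp (- (f + h)) \<le> v x * v (x + 2) / v (x + 1) ^ 2"
    using neighbour_quotient_ge[OF v, of "x + 1" x, OF _ nbr] by (simp add: algebra_simps)
  have left: "(1 - h ^ 2) * exp (- (f + h)) \<le> v x * v (x - 2) / v (x - 1) ^ 2"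
    using neighbour_quotient_ge[OF v, of "x - 1" x, OF _ nbr] by (simp add: algebra_simps)
  have "lap (\<lambda>y. w y / v y) x
      = (v (x + 2) + v x - 2 * v (x + 1)) / v (x + 1) + (v (x - 2) + v x - 2 * v (x - 1)) / v (x - 1)
        - 2 * (v (x + 1) + v (x - 1) - 2 * v x) / v x"
    by (simp add: lap_def w algebra_simps)
  with second_difference_quotient_gt_F57[OF v v v f h ratio right left] show ?thesis by simp
qed

lemma first_nonneg_time:
  fixes \<Phi> :: "'a \<Rightarrow> real \<Rightarrow> real"
  assumes S: "finite S"
    and cont: "\<And>y t. y \<in> S \<Longrightarrow> t > 0 \<Longrightarrow> isCont (\<Phi> y) t"
    and b: "b > 0" and early: "\<And>y t. y \<in> S \<Longrightarrow> 0 < t \<Longrightarrow> t < b \<Longrightarrow> \<Phi> y t < 0"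
    and x1: "x1 \<in> S" and t1: "t1 > 0" and nonneg: "\<Phi> x1 t1 \<ge> 0"
  obtains x ts where "x \<in> S" "ts > 0" "\<Phi> x ts \<ge> 0"
    and "\<And>y s. y \<in> S \<Longrightarrow> 0 < s \<Longrightarrow> s < ts \<Longrightarrow> \<Phi> y s < 0"
proof -
  define e where "e = b / 2"
  have e: "0 < e" "e < b" using b by (auto simp: e_def)
  have "t1 \<ge> b" using early[OF x1 t1] nonneg by (meson not_le not_less)
  define Z where "Z = (\<Union>y\<in>S. {e..t1} \<inter> \<Phi> y -` {0..})"
  have "closed Z" unfolding Z_def
  proof (intro closed_UN S ballI continuous_closed_preimage)
    fix y assume "y \<in> S"
    then show "continuous_on {e..t1} (\<Phi> y)"
      using e by (intro continuous_at_imp_continuous_on ballI cont) auto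
  qed auto
  moreover have "bounded Z" by (rule bounded_subset[of "{e..t1}"]) (auto simp: Z_def)
  moreover have "t1 \<in> Z" using x1 nonneg \<open>t1 \<ge> b\<close> e by (auto simp: Z_def)
  ultimately obtain ts where tsZ: "ts \<in> Z" and tsmin: "\<And>s. s \<in> Z \<Longrightarrow> ts \<le> s"
    using compact_attains_inf compact_eq_bounded_closed by (metis empty_iff)
  from tsZ obtain x where x: "x \<in> S" and "e \<le> ts" "ts \<le> t1" and nonneg: "\<Phi> x ts \<ge> 0"
    by (auto simp: Z_def)
  have "ts > 0" using e \<open>e \<le> ts\<close> by linarith
  moreover have "\<Phi> y s < 0" if "y \<in> S" "0 < s" "s < ts" for y s
  proof (cases "s < b")
    case True
    then show ?thesis using early that by blast
  next
    case False
    then have "s \<notin> Z" using tsmin that by fastforce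
    then show ?thesis
      using False e that \<open>ts \<le> t1\<close> by (auto simp: Z_def not_le)
  qed
  ultimately show ?thesis using that x nonneg by blast
qed

lemma finite_family_stays_negative:
  fixes \<Phi> \<Phi>' :: "'a \<Rightarrow> real \<Rightarrow> real"
  assumes S: "finite S"
    and deriv: "\<And>y t. y \<in> S \<Longrightarrow> t > 0 \<Longrightarrow> (\<Phi> y has_real_derivative \<Phi>' y t) (at t)"
    and initially: "eventually (\<lambda>t. \<forall>y\<in>S. \<Phi> y t < 0) (at_right 0)"
    and touch: "\<And>x t. x \<in> S \<Longrightarrow> t > 0 \<Longrightarrow> \<Phi> x t = 0 \<Longrightarrow> (\<forall>y\<in>S. \<Phi> y t \<le> 0) \<Longrightarrow>
      \<Phi>' x t < 0"
    and y: "y \<in> S" and t: "t > 0"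
  shows "\<Phi> y t < 0"
proof (rule ccontr)
  assume "\<not> \<Phi> y t < 0"
  then have nonneg: "\<Phi> y t \<ge> 0" by simp
  obtain b where b: "b > 0" and early: "\<And>y s. y \<in> S \<Longrightarrow> 0 < s \<Longrightarrow> s < b \<Longrightarrow> \<Phi> y s < 0"
    using initially unfolding eventually_at_right_field by auto
  have cont: "isCont (\<Phi> y) t" if "y \<in> S" "t > 0" for y t
    using deriv[OF that] by (rule DERIV_isCont)
  obtain x ts where x: "x \<in> S" and ts: "ts > 0" and "\<Phi> x ts \<ge> 0"
    and before: "\<And>y s. y \<in> S \<Longrightarrow> 0 < s \<Longrightarrow> s < ts \<Longrightarrow> \<Phi> y s < 0"
    using first_nonneg_time[where \<Phi> = \<Phi>, OF S cont b early y t nonneg] by blast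
  have le: "\<Phi> z ts \<le> 0" if z: "z \<in> S" for z
  proof (rule tendsto_upperbound)
    show "(\<Phi> z \<longlongrightarrow> \<Phi> z ts) (at_left ts)"
      using cont[OF z ts] unfolding isCont_def by (rule tendsto_within_subset) auto
    show "eventually (\<lambda>s. \<Phi> z s \<le> 0) (at_left ts)"
      unfolding eventually_at_left_field using ts before z
      by (intro exI[of _ 0]) (auto intro: less_imp_le)
  qed simp
  with x \<open>\<Phi> x ts \<ge> 0\<close> have zero: "\<Phi> x ts = 0" by (meson order.antisym)
  obtain d where d: "d > 0" and dec: "\<And>h. h > 0 \<Longrightarrow> h < d \<Longrightarrow> \<Phi> x ts < \<Phi> x (ts - h)"
    using DERIV_neg_dec_left[OF deriv[OF x ts] touch[OF x ts zero]] le by blast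
  define h where "h = min (d / 2) (ts / 2)"
  have "0 < h" "h < d" "h < ts" using d ts by (auto simp: h_def)
  then have "\<Phi> x ts < \<Phi> x (ts - h)" and "\<Phi> x (ts - h) < 0"
    using dec before[OF x] by auto
  with zero show False by simp
qed

lemma two_div_le_of_pred_le:
  fixes k k' :: int
  assumes k: "k \<ge> 1" and k': "k' \<ge> 1" and kk': "k - 1 \<le> k'"
  shows "2 / real_of_int k' \<le> 2 / real_of_int k + (2 / real_of_int k) ^ 2"
proof (cases "k \<le> k'")
  case True
  then have "2 / real_of_int k' \<le> 2 / real_of_int k" using k by (intro divide_left_mono) auto
  then show ?thesis by (simp add: add_increasing2)
next
  case False
  then have k: "real_of_int k' = real_of_int k - 1" "real_of_int k \<ge> 2" using kk' k' by auto
  have "2 / (real_of_int k - 1) = 2 / real_of_int k + 2 / (real_of_int k * (real_of_int k - 1))"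
    using k by (simp add: field_simps)
  also have "\<dots> \<le> 2 / real_of_int k + 4 / real_of_int k ^ 2"
    using k by (simp add: field_simps power2_eq_square)
  finally show ?thesis by (simp add: k power_divide)
qed

definition ball_barrier :: "int \<Rightarrow> nat \<Rightarrow> int \<Rightarrow> real" where
  "ball_barrier x0 r y = 2 / real_of_int (2 * int r - \<bar>y - x0\<bar>)"

lemma ball_barrier_pos: "\<bar>y - x0\<bar> < 2 * int r \<Longrightarrow> ball_barrier x0 r y > 0"
  by (simp add: ball_barrier_def)

lemma ball_barrier_neighbour_le:
  assumes "\<bar>y - x0\<bar> < 2 * int r" and "\<bar>z - x0\<bar> < 2 * int r" and "\<bar>z - y\<bar> = 1"
  shows "ball_barrier x0 r z \<le> ball_barrier x0 r y + ball_barrier x0 r y ^ 2"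
  unfolding ball_barrier_def using assms by (intro two_div_le_of_pred_le) auto

lemma ball_barrier_edge:
  assumes "\<bar>y - x0\<bar> < 2 * int r" and "\<not> \<bar>z - x0\<bar> < 2 * int r" and "\<bar>z - y\<bar> = 1"
  shows "ball_barrier x0 r y = 2"
proof -
  have "2 * int r - \<bar>y - x0\<bar> = 1" using assms by arith
  then show ?thesis by (simp add: ball_barrier_def)
qed

lemma ball_barrier_le:
  assumes "\<bar>y - x0\<bar> \<le> int r" and "r > 0"
  shows "ball_barrier x0 r y \<le> 2 / real r"
  unfolding ball_barrier_def using assms by (intro divide_left_mono) auto

lemma has_real_derivative_at_if_within_atLeast:
  assumes "(f has_real_derivative D) (at t within {a..})" and "a < t"
  shows "(f has_real_derivative D) (at t)"
proof -
  have "at t within {a..} = at t" using \<open>a < t\<close> by (intro at_within_interior) simp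
  with assms(1) show ?thesis by simp
qed

lemma deriv_ln_minus_Psi_Upsilon:
  fixes u :: "real \<Rightarrow> int \<Rightarrow> real"
  assumes pos: "\<And>y. u t y > 0"
    and heat: "((\<lambda>s. u s x) has_real_derivative lap (u t) x) (at t)"
  shows "deriv (\<lambda>s. ln (u s x)) t - Psi Upsilon (\<lambda>y. ln (u t y)) x = lap (\<lambda>y. ln (u t y)) x"
proof -
  have "((\<lambda>s. ln (u s x)) has_real_derivative 1 / u t x * lap (u t) x) (at t)"
    by (rule DERIV_chain2[OF DERIV_ln_divide[OF pos[of x]] heat])
  then have d: "deriv (\<lambda>s. ln (u s x)) t = lap (u t) x / u t x" by (simp add: DERIV_imp_deriv)
  show ?thesis unfolding d
    using pos[of x] pos[of "x + 1"] pos[of "x - 1"]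
    by (simp add: lap_def Psi_def Upsilon_def exp_diff field_simps)
qed

lemma eventually_neg_lap_ln_lt:
  fixes u :: "real \<Rightarrow> int \<Rightarrow> real" and \<phi> :: "real \<Rightarrow> real"
  assumes cont: "\<And>y. ((\<lambda>s. u s y) \<longlongrightarrow> u 0 y) (at_right 0)"
    and pos: "\<And>y. u 0 y > 0"
    and blowup: "filterlim \<phi> at_top (at_right 0)"
  shows "eventually (\<lambda>t. - lap (\<lambda>y. ln (u t y)) x < \<phi> t) (at_right 0)"
proof -
  have "((\<lambda>t. lap (\<lambda>y. ln (u t y)) x) \<longlongrightarrow> lap (\<lambda>y. ln (u 0 y)) x) (at_right 0)"
    unfolding lap_def using pos by (intro tendsto_intros cont) (auto simp: less_imp_neq[symmetric])
  then have "filterlim (\<lambda>t. lap (\<lambda>y. ln (u t y)) x + \<phi> t) at_top (at_right 0)"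
    by (rule filterlim_tendsto_add_at_top[OF _ blowup])
  then have "eventually (\<lambda>t. 0 < lap (\<lambda>y. ln (u t y)) x + \<phi> t) (at_right 0)"
    unfolding filterlim_at_top_dense by blast
  then show ?thesis by eventually_elim linarith
qed

lemma neg_lap_ln_lt_relaxation_plus_barrier:
  fixes x0 :: int and r :: nat and u ut :: "real \<Rightarrow> int \<Rightarrow> real" and \<phi> :: "real \<Rightarrow> real"
  assumes pos: "\<And>t y. t \<ge> 0 \<Longrightarrow> u t y > 0"
    and der: "\<And>t y. t \<ge> 0 \<Longrightarrow> ((\<lambda>s. u s y) has_real_derivative ut t y) (at t within {0..})"
    and heat: "\<And>t y. t \<ge> 0 \<Longrightarrow> y \<in> cball_Z x0 (2 * r) \<Longrightarrow> ut t y = lap (u t) y"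
    and rel: "is_relaxation_function F57 \<phi>"
    and t: "t > 0" and x: "\<bar>x - x0\<bar> < 2 * int r"
  shows "- lap (\<lambda>y. ln (u t y)) x < \<phi> t + ball_barrier x0 r x"
proof -
  define S where "S = {y. \<bar>y - x0\<bar> < 2 * int r}"
  have "finite S"
    by (rule finite_subset[of _ "{x0 - 2 * int r..x0 + 2 * int r}"]) (auto simp: S_def)
  define \<Phi> where "\<Phi> y t = - lap (\<lambda>z. ln (u t z)) y - \<phi> t - ball_barrier x0 r y" for y t
  define \<Phi>' where "\<Phi>' y t = - lap (\<lambda>z. ut t z / u t z) y + F57 (\<phi> t)" for y t
  have \<phi>: "\<phi> t > 0" "(\<phi> has_real_derivative - F57 (\<phi> t)) (at t)" if "t > 0" for t
    using rel that by (auto simp: is_relaxation_function_def)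
  have "\<Phi> y t < 0" if "y \<in> S" "t > 0" for y t
  proof (rule finite_family_stays_negative[OF \<open>finite S\<close>, of \<Phi> \<Phi>'])
    fix y :: int and t :: real assume "y \<in> S" "t > 0"
    have "((\<lambda>s. u s z) has_real_derivative ut t z) (at t)" for z
      using der[of t z] \<open>t > 0\<close> by (simp add: has_real_derivative_at_if_within_atLeast)
    then have "((\<lambda>s. ln (u s z)) has_real_derivative 1 / u t z * ut t z) (at t)" for z
      using \<open>t > 0\<close> pos[of t z] by (intro DERIV_chain2[OF DERIV_ln_divide]) simp_all
    then have ln_u: "((\<lambda>s. ln (u s z)) has_real_derivative ut t z / u t z) (at t)" for z
      by simp
    have "((\<lambda>s. lap (\<lambda>z. ln (u s z)) y) has_real_derivative lap (\<lambda>z. ut t z / u t z) y) (at t)"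
      unfolding lap_def by (rule DERIV_add[OF DERIV_diff[OF ln_u DERIV_cmult[OF ln_u]] ln_u])
    then have "((\<lambda>s. - lap (\<lambda>z. ln (u s z)) y - \<phi> s - ball_barrier x0 r y) has_real_derivative
        - lap (\<lambda>z. ut t z / u t z) y - - F57 (\<phi> t) - 0) (at t)"
      by (rule DERIV_diff[OF DERIV_diff[OF DERIV_minus \<phi>(2)[OF \<open>t > 0\<close>]] DERIV_const])
    then show "(\<Phi> y has_real_derivative \<Phi>' y t) (at t)"
      by (simp add: \<Phi>_def[abs_def] \<Phi>'_def)
  next
    have "((\<lambda>s. u s y) \<longlongrightarrow> u 0 y) (at_right 0)" for y
      using DERIV_continuous[OF der[of 0 y]] unfolding continuous_within
      by (rule tendsto_within_subset) auto
    then have "eventually (\<lambda>t. - lap (\<lambda>z. ln (u t z)) y < \<phi> t) (at_right 0)" for y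
      using pos rel by (intro eventually_neg_lap_ln_lt) (auto simp: is_relaxation_function_def)
    then have "eventually (\<lambda>t. \<forall>y\<in>S. - lap (\<lambda>z. ln (u t z)) y < \<phi> t) (at_right 0)"
      using \<open>finite S\<close> by (simp add: eventually_ball_finite_distrib)
    then show "eventually (\<lambda>t. \<forall>y\<in>S. \<Phi> y t < 0) (at_right 0)"
      by eventually_elim (use ball_barrier_pos in \<open>fastforce simp: \<Phi>_def S_def\<close>)
  next
    fix x :: int and t :: real assume x: "x \<in> S" and t: "t > 0"
      and touching: "\<Phi> x t = 0" and below: "\<forall>y\<in>S. \<Phi> y t \<le> 0"
    have "F57 (\<phi> t) < lap (\<lambda>y. ut t y / u t y) x"
    proof (rule lap_quotient_gt_F57[where g = "ball_barrier x0 r"])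
      show "ut t y = lap (u t) y" if "\<bar>y - x\<bar> \<le> 1" for y
        using heat t that x by (auto simp: S_def cball_Z_def)
      show "- lap (\<lambda>y. ln (u t y)) x = \<phi> t + ball_barrier x0 r x"
        using touching by (simp add: \<Phi>_def)
      show "1 \<le> ball_barrier x0 r x \<or>
          (- lap (\<lambda>z. ln (u t z)) y \<le> \<phi> t + ball_barrier x0 r y \<and>
           ball_barrier x0 r y \<le> ball_barrier x0 r x + ball_barrier x0 r x ^ 2)"
        if "\<bar>y - x\<bar> = 1" for y
      proof (cases "y \<in> S")
        case True
        then show ?thesis
          using below that x ball_barrier_neighbour_le[of x x0 r y] by (auto simp: \<Phi>_def S_def)
      next
        case False
        then show ?thesis using ball_barrier_edge[of x x0 r y] that x by (simp add: S_def)
      qed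
    qed (use pos t \<phi>(1) x ball_barrier_pos in \<open>auto simp: S_def\<close>)
    then show "\<Phi>' x t < 0" by (simp add: \<Phi>'_def)
  qed (use that in auto)
  then have "\<Phi> x t < 0" using x t by (simp add: S_def)
  then show ?thesis by (simp add: \<Phi>_def)
qed

theorem theorem5p7:
  "\<exists>C>0. \<forall>(x0::int) (r::nat) (u::real \<Rightarrow> int \<Rightarrow> real) (ut::real \<Rightarrow> int \<Rightarrow> real) (\<phi>::real \<Rightarrow> real).
     r > 0 \<and>
     (\<forall>t\<ge>0. \<forall>x. u t x > 0) \<and>
     (\<forall>x. \<forall>t\<ge>0. ((\<lambda>s. u s x) has_real_derivative ut t x) (at t within {0..})) \<and>
     (\<forall>x. continuous_on {0..} (\<lambda>t. ut t x)) \<and>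
     (\<forall>t\<ge>0. \<forall>x\<in>cball_Z x0 (2 * r). ut t x = lap (u t) x) \<and>
     is_relaxation_function F57 \<phi>
     \<longrightarrow> (\<forall>t>0. \<forall>x\<in>cball_Z x0 r.
           deriv (\<lambda>s. ln (u s x)) t \<ge> Psi Upsilon (\<lambda>y. ln (u t y)) x - \<phi> t - C / real r)"
proof (intro exI[of _ 2] conjI allI impI ballI, simp, elim conjE)
  fix x0 x :: int and r :: nat and u ut :: "real \<Rightarrow> int \<Rightarrow> real" and \<phi> :: "real \<Rightarrow> real"
    and t :: real
  assume r: "r > 0" and pos: "\<forall>t\<ge>0. \<forall>x. u t x > 0"
    and der: "\<forall>x. \<forall>t\<ge>0. ((\<lambda>s. u s x) has_real_derivative ut t x) (at t within {0..})"
    and heat: "\<forall>t\<ge>0. \<forall>x\<in>cball_Z x0 (2 * r). ut t x = lap (u t) x"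
    and rel: "is_relaxation_function F57 \<phi>"
    and t: "t > 0" and x: "x \<in> cball_Z x0 r"
  have x_in: "\<bar>x - x0\<bar> \<le> int r" using x by (simp add: cball_Z_def)
  have bound: "- lap (\<lambda>y. ln (u t y)) x < \<phi> t + ball_barrier x0 r x"
    using pos der heat rel t x_in r
    by (intro neg_lap_ln_lt_relaxation_plus_barrier[where u = u and ut = ut and \<phi> = \<phi>]) auto
  have "ut t x = lap (u t) x" using heat t x_in by (simp add: cball_Z_def)
  then have "((\<lambda>s. u s x) has_real_derivative lap (u t) x) (at t)"
    using der t by (metis has_real_derivative_at_if_within_atLeast less_imp_le)
  then have "deriv (\<lambda>s. ln (u s x)) t - Psi Upsilon (\<lambda>y. ln (u t y)) x = lap (\<lambda>y. ln (u t y)) x"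
    using pos t by (intro deriv_ln_minus_Psi_Upsilon) auto
  with bound ball_barrier_le[OF x_in r]
  show "deriv (\<lambda>s. ln (u s x)) t \<ge> Psi Upsilon (\<lambda>y. ln (u t y)) x - \<phi> t - 2 / real r"
    by linarith
qed

end
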